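(* Let $m,p,n$ be positive integers with $p\mid m$, $n>1$, $G=G(m,p,n)$, and let $\mathbf T=(T_1,\ldots,T_n)$ be a tuple of commuting contractions on a Hilbert space. Then $\boldsymbol\theta(\mathbf T)=(\theta_1(\mathbf T),\dots,\theta_n(\mathbf T))$ is a $\boldsymbol\Theta_n$-contraction if and only if $\mathbf T$ satisfies von Neumann's inequality for all $G$-invariant polynomials, i.e. $\|q(\mathbf T)\|\le\sup_{\overline{\mathbb D}^n}|q|$ for every $G$-invariant $q\in\mathbb C[z_1,\ldots,z_n]$.
   Context: Put $q_0=m/p$. $G(m,p,n)$ is the group of $n\times n$ monomial matrices whose nonzero entries are $m$-th roots of unity and whose product of nonzero entries is an $(m/p)$-th root of unity; it acts on $\mathbb C^n$ by $\sigma\cdot z=\sigma^{-1}z$, and a polynomial $q$ is $G$-invariant if $q(\sigma^{-1}\cdot z)=q(z)$ for all $\sigma\in G$. $\theta_i(z)=s_i(z_1^m,\ldots,z_n^m)$ for $1\le i\le n-1$ ($s_i$ the $i$-th elementary symmetric polynomial), $\theta_n(z)=(z_1\cdots z_n)^{q_0}$, $\boldsymbol\Theta_n=\boldsymbol\theta(\mathbb D^n)$, $\overline{\boldsymbol\Theta}_n=\boldsymbol\theta(\overline{\mathbb D}^n)$. A commuting tuple $(S_1,\dots,S_n)$ is a $\boldsymbol\Theta_n$-contraction if $\|f(S_1,\dots,S_n)\|\le\sup_{\overline{\boldsymbol\Theta}_n}|f|$ for every polynomial $f$. *)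

theory Defs
  imports "HOL-Analysis.Analysis" "HOL-Library.Poly_Mapping"
begin

text \<open>A complex Hilbert space is such a space which is moreover complete.\<close>

class complex_inner = real_normed_vector +
  fixes scaleC :: "complex \<Rightarrow> 'a \<Rightarrow> 'a" (infixr \<open>*\<^sub>C\<close> 75)
    and cinner :: "'a \<Rightarrow> 'a \<Rightarrow> complex"
  assumes scaleC_of_real: "scaleC (complex_of_real r) x = scaleR r x"
    and scaleC_add_right: "scaleC a (x + y) = scaleC a x + scaleC a y"
    and scaleC_add_left: "scaleC (a + b) x = scaleC a x + scaleC b x"
    and scaleC_scaleC: "scaleC a (scaleC b x) = scaleC (a * b) x"
    and scaleC_one: "scaleC 1 x = x"
    and cinner_commute: "cinner x y = cnj (cinner y x)"
    and cinner_add_left: "cinner (x + y) z = cinner x z + cinner y z"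
    and cinner_scaleC_left: "cinner (scaleC a x) y = cnj a * cinner x y"
    and cinner_self_norm: "cinner x x = complex_of_real ((norm x)\<^sup>2)"

definition bounded_clinear_op :: "('h::complex_inner \<Rightarrow> 'h) \<Rightarrow> bool" where
  "bounded_clinear_op T \<longleftrightarrow> bounded_linear T \<and> (\<forall>c x. T (c *\<^sub>C x) = c *\<^sub>C T x)"

type_synonym cpoly = "(nat \<Rightarrow>\<^sub>0 nat) \<Rightarrow>\<^sub>0 complex"

definition poly_in_vars :: "nat \<Rightarrow> cpoly \<Rightarrow> bool" where
  "poly_in_vars n q \<longleftrightarrow> (\<forall>\<alpha>::nat \<Rightarrow>\<^sub>0 nat\<in>Poly_Mapping.keys q. Poly_Mapping.keys \<alpha> \<subseteq> {..<n})"

definition peval :: "cpoly \<Rightarrow> (nat \<Rightarrow> complex) \<Rightarrow> complex" where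
  "peval q z = (\<Sum>\<alpha>\<in>Poly_Mapping.keys q. Poly_Mapping.lookup q \<alpha> * (\<Prod>i\<in>Poly_Mapping.keys \<alpha>. z i ^ Poly_Mapping.lookup \<alpha> i))"

definition mono_op :: "(nat \<Rightarrow> 'h \<Rightarrow> 'h) \<Rightarrow> (nat \<Rightarrow>\<^sub>0 nat) \<Rightarrow> 'h \<Rightarrow> 'h" where
  "mono_op T \<alpha> = foldr (\<lambda>i f. (T i ^^ Poly_Mapping.lookup \<alpha> i) \<circ> f) (sorted_list_of_set (Poly_Mapping.keys \<alpha>)) id"

definition opeval :: "cpoly \<Rightarrow> (nat \<Rightarrow> 'h::complex_inner \<Rightarrow> 'h) \<Rightarrow> 'h \<Rightarrow> 'h" where
  "opeval q T = (\<lambda>x. \<Sum>\<alpha>\<in>Poly_Mapping.keys q. Poly_Mapping.lookup q \<alpha> *\<^sub>C mono_op T \<alpha> x)"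

text \<open>Points of C^n are functions nat => complex vanishing from index n on.\<close>
definition closed_polydisc :: "nat \<Rightarrow> (nat \<Rightarrow> complex) set" where
  "closed_polydisc n = {z. (\<forall>i<n. cmod (z i) \<le> 1) \<and> (\<forall>i\<ge>n. z i = 0)}"

text \<open>The polynomial theta_(k+1) (0-based index k < n):
  theta_i = s_i(z_1^m,...,z_n^m) for 1 <= i <= n-1, theta_n = (z_1...z_n)^(m/p).\<close>
definition theta_poly :: "nat \<Rightarrow> nat \<Rightarrow> nat \<Rightarrow> nat \<Rightarrow> cpoly" where
  "theta_poly m p n k =
     (if k + 1 < n then
        (\<Sum>S\<in>{S. S \<subseteq> {..<n} \<and> card S = k + 1}.
            Poly_Mapping.single (\<Sum>j\<in>S. Poly_Mapping.single j m) 1)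
      else if k + 1 = n then
        Poly_Mapping.single (\<Sum>j<n. Poly_Mapping.single j (m div p)) 1
      else 0)"

definition theta :: "nat \<Rightarrow> nat \<Rightarrow> nat \<Rightarrow> (nat \<Rightarrow> complex) \<Rightarrow> (nat \<Rightarrow> complex)" where
  "theta m p n z = (\<lambda>k. peval (theta_poly m p n k) z)"

definition closed_Theta :: "nat \<Rightarrow> nat \<Rightarrow> nat \<Rightarrow> (nat \<Rightarrow> complex) set" where
  "closed_Theta m p n = theta m p n ` closed_polydisc n"

definition theta_op :: "nat \<Rightarrow> nat \<Rightarrow> nat \<Rightarrow> (nat \<Rightarrow> 'h::complex_inner \<Rightarrow> 'h) \<Rightarrow> nat \<Rightarrow> 'h \<Rightarrow> 'h" where
  "theta_op m p n T = (\<lambda>k. opeval (theta_poly m p n k) T)"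

definition commuting_tuple :: "nat \<Rightarrow> (nat \<Rightarrow> 'h::complex_inner \<Rightarrow> 'h) \<Rightarrow> bool" where
  "commuting_tuple n T \<longleftrightarrow>
     (\<forall>i<n. bounded_clinear_op (T i)) \<and> (\<forall>i<n. \<forall>j<n. T i \<circ> T j = T j \<circ> T i)"

definition commuting_contractions :: "nat \<Rightarrow> (nat \<Rightarrow> 'h::complex_inner \<Rightarrow> 'h) \<Rightarrow> bool" where
  "commuting_contractions n T \<longleftrightarrow> commuting_tuple n T \<and> (\<forall>i<n. onorm (T i) \<le> 1)"

definition Theta_contraction :: "nat \<Rightarrow> nat \<Rightarrow> nat \<Rightarrow> (nat \<Rightarrow> 'h::complex_inner \<Rightarrow> 'h) \<Rightarrow> bool" where
  "Theta_contraction m p n S \<longleftrightarrow> commuting_tuple n S \<and>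
     (\<forall>f. poly_in_vars n f \<longrightarrow>
        onorm (opeval f S) \<le> (SUP w\<in>closed_Theta m p n. cmod (peval f w)))"

text \<open>n x n matrices as functions nat => nat => complex, zero outside {..<n}^2.
A monomial matrix A has A i j = zeta i if j = sigma i, else 0, for a permutation
sigma of {..<n}.\<close>
definition Gmpn :: "nat \<Rightarrow> nat \<Rightarrow> nat \<Rightarrow> (nat \<Rightarrow> nat \<Rightarrow> complex) set" where
  "Gmpn m p n = {A. \<exists>\<sigma> \<zeta>. \<sigma> permutes {..<n} \<and>
       (\<forall>i j. A i j = (if i < n \<and> j < n \<and> j = \<sigma> i then \<zeta> i else 0)) \<and>
       (\<forall>i<n. \<zeta> i ^ m = 1) \<and> (\<Prod>i<n. \<zeta> i) ^ (m div p) = 1}"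

definition matvec :: "nat \<Rightarrow> (nat \<Rightarrow> nat \<Rightarrow> complex) \<Rightarrow> (nat \<Rightarrow> complex) \<Rightarrow> (nat \<Rightarrow> complex)" where
  "matvec n A z = (\<lambda>i. \<Sum>j<n. A i j * z j)"

text \<open>sigma . z = sigma^(-1) z; q is G-invariant iff q(sigma^(-1) . z) = q(z), i.e.
q(sigma z) = q(z) for all sigma in G (G being closed under inverses).\<close>
definition G_invariant :: "nat \<Rightarrow> nat \<Rightarrow> nat \<Rightarrow> cpoly \<Rightarrow> bool" where
  "G_invariant m p n q \<longleftrightarrow>
     (\<forall>A\<in>Gmpn m p n. \<forall>z. peval q (matvec n A z) = peval q z)"

end

theory Submission
  imports Defs
begin

text \<open>The polynomials \<open>\<theta>\<^sub>1, \<dots>, \<theta>\<^sub>n\<close> generate the algebra of \<open>G(m,p,n)\<close>-invariant polynomials.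
  Invariance under diagonal matrices and under transpositions forces the lexicographically leading
  exponent \<open>\<alpha>\<close> of an invariant polynomial to satisfy \<open>\<alpha>\<^sub>i \<equiv> \<alpha>\<^sub>j (mod m)\<close>, \<open>m/p\<close> divides every \<open>\<alpha>\<^sub>i\<close>
  and \<open>\<alpha>\<close> is decreasing; every such \<open>\<alpha>\<close> is the leading exponent of a monomial \<open>\<theta>\<^sup>\<gamma>\<close>, and subtracting
  a multiple of it lowers the leading exponent. Hence every invariant \<open>q\<close> is \<open>f \<circ> \<theta>\<close>, and
  conversely every \<open>f \<circ> \<theta>\<close> is invariant. As evaluation at commuting operators is multiplicative,
  \<open>(f \<circ> \<theta>)(T) = f(\<theta>(T))\<close>, while the supremum of \<open>|f \<circ> \<theta>|\<close> over the closed polydisc is that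
  of \<open>|f|\<close> over its image, the closure of \<open>\<Theta>\<^sub>n\<close>; so the two families of inequalities coincide.\<close>

abbreviation lookup :: "('a \<Rightarrow>\<^sub>0 'b::zero) \<Rightarrow> 'a \<Rightarrow> 'b" where
  "lookup \<equiv> Poly_Mapping.lookup"

abbreviation keys :: "('a \<Rightarrow>\<^sub>0 'b::zero) \<Rightarrow> 'a set" where
  "keys \<equiv> Poly_Mapping.keys"

abbreviation single :: "'a \<Rightarrow> 'b \<Rightarrow> 'a \<Rightarrow>\<^sub>0 'b::zero" where
  "single \<equiv> Poly_Mapping.single"

lemma poly_mapping_sum_single: "(\<Sum>\<alpha>\<in>keys p. single \<alpha> (lookup p \<alpha>)) = (p :: 'a \<Rightarrow>\<^sub>0 'b::comm_monoid_add)"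
proof (rule poly_mapping_eqI)
  fix k
  have "lookup (\<Sum>\<alpha>\<in>A. single \<alpha> (lookup p \<alpha>)) k = (if k \<in> A then lookup p k else 0)" if "finite A" for A
    using that by (induction A rule: finite_induct) (auto simp: lookup_single lookup_add when_def)
  then show "lookup (\<Sum>\<alpha>\<in>keys p. single \<alpha> (lookup p \<alpha>)) k = lookup p k"
    by (simp add: in_keys_iff)
qed

lemma times_poly_mapping_expand:
  fixes p q :: "'a::comm_monoid_add \<Rightarrow>\<^sub>0 'b::comm_semiring_0"
  shows "p * q = (\<Sum>\<alpha>\<in>keys p. \<Sum>\<beta>\<in>keys q. single (\<alpha> + \<beta>) (lookup p \<alpha> * lookup q \<beta>))"
proof -
  have "p * q = (\<Sum>\<alpha>\<in>keys p. single \<alpha> (lookup p \<alpha>)) * (\<Sum>\<beta>\<in>keys q. single \<beta> (lookup q \<beta>))"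
    by (simp only: poly_mapping_sum_single)
  then show ?thesis
    by (simp add: sum_product mult_single)
qed

definition mono_eval :: "('i \<Rightarrow>\<^sub>0 nat) \<Rightarrow> ('i \<Rightarrow> 'a::comm_monoid_mult) \<Rightarrow> 'a" where
  "mono_eval \<alpha> z = (\<Prod>i\<in>keys \<alpha>. z i ^ lookup \<alpha> i)"

lemma mono_eval_superset:
  "finite K \<Longrightarrow> keys \<alpha> \<subseteq> K \<Longrightarrow> mono_eval \<alpha> z = (\<Prod>i\<in>K. z i ^ lookup \<alpha> i)"
  unfolding mono_eval_def by (rule prod.mono_neutral_left) (auto simp: in_keys_iff)

lemma mono_eval_zero [simp]: "mono_eval 0 z = 1"
  by (simp add: mono_eval_def)

lemma mono_eval_single [simp]: "mono_eval (single j e) z = z j ^ e"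
  by (simp add: mono_eval_def)

lemma mono_eval_add: "mono_eval (\<alpha> + \<beta>) z = mono_eval \<alpha> z * mono_eval \<beta> z"
proof -
  let ?K = "keys \<alpha> \<union> keys \<beta>"
  have "mono_eval (\<alpha> + \<beta>) z = (\<Prod>i\<in>?K. z i ^ lookup \<alpha> i) * (\<Prod>i\<in>?K. z i ^ lookup \<beta> i)"
    by (subst mono_eval_superset[of ?K]) (auto simp: keys_add lookup_add power_add prod.distrib)
  then show ?thesis
    by (simp add: mono_eval_superset[of ?K \<alpha>] mono_eval_superset[of ?K \<beta>])
qed

lemma mono_eval_sum: "mono_eval (\<Sum>j\<in>S. \<alpha> j) z = (\<Prod>j\<in>S. mono_eval (\<alpha> j) z)"
  by (induction S rule: infinite_finite_induct) (auto simp: mono_eval_add)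

lemma mono_eval_mult: "mono_eval \<alpha> (\<lambda>i. a i * b i) = mono_eval \<alpha> a * mono_eval \<alpha> b"
  by (simp add: mono_eval_def power_mult_distrib prod.distrib)

lemma mono_eval_cong: "(\<And>i. i \<in> keys \<alpha> \<Longrightarrow> z i = w i) \<Longrightarrow> mono_eval \<alpha> z = mono_eval \<alpha> w"
  by (simp add: mono_eval_def)

lemma peval_eq: "peval q z = (\<Sum>\<alpha>\<in>keys q. lookup q \<alpha> * mono_eval \<alpha> z)"
  by (simp add: peval_def mono_eval_def)

lemma peval_superset:
  "finite K \<Longrightarrow> keys q \<subseteq> K \<Longrightarrow> peval q z = (\<Sum>\<alpha>\<in>K. lookup q \<alpha> * mono_eval \<alpha> z)"
  unfolding peval_eq by (rule sum.mono_neutral_left) (auto simp: in_keys_iff)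

lemma peval_zero [simp]: "peval 0 z = 0"
  by (simp add: peval_def)

lemma peval_one [simp]: "peval 1 z = 1"
  by (simp add: peval_eq)

lemma peval_single [simp]: "peval (single \<alpha> c) z = c * mono_eval \<alpha> z"
  by (simp add: peval_eq)

lemma peval_add: "peval (p + q) z = peval p z + peval q z"
proof -
  let ?K = "keys p \<union> keys q"
  have "peval (p + q) z = (\<Sum>\<alpha>\<in>?K. lookup p \<alpha> * mono_eval \<alpha> z) + (\<Sum>\<alpha>\<in>?K. lookup q \<alpha> * mono_eval \<alpha> z)"
    by (subst peval_superset[of ?K]) (auto simp: keys_add lookup_add distrib_right sum.distrib)
  then show ?thesis
    by (simp add: peval_superset[of ?K p] peval_superset[of ?K q])
qed

lemma peval_diff: "peval (p - q) z = peval p z - peval q z"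
  by (metis add_diff_cancel_right' diff_add_cancel peval_add)

lemma peval_sum: "peval (\<Sum>j\<in>S. f j) z = (\<Sum>j\<in>S. peval (f j) z)"
  by (induction S rule: infinite_finite_induct) (auto simp: peval_add)

lemma peval_mult: "peval (p * q) z = peval p z * peval q z"
proof -
  have "peval (p * q) z
      = (\<Sum>\<alpha>\<in>keys p. \<Sum>\<beta>\<in>keys q. (lookup p \<alpha> * mono_eval \<alpha> z) * (lookup q \<beta> * mono_eval \<beta> z))"
    by (simp add: times_poly_mapping_expand[of p q] peval_sum mono_eval_add mult_ac)
  then show ?thesis
    by (simp add: peval_eq sum_product)
qed

lemma peval_power: "peval (p ^ k) z = peval p z ^ k"
  by (induction k) (auto simp: peval_mult)

lemma peval_prod: "peval (\<Prod>j\<in>S. f j) z = (\<Prod>j\<in>S. peval (f j) z)"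
  by (induction S rule: infinite_finite_induct) (auto simp: peval_mult)

definition exps :: "nat \<Rightarrow> (nat \<Rightarrow>\<^sub>0 nat) set" where
  "exps n = {\<alpha>. keys \<alpha> \<subseteq> {..<n}}"

lemma exps_zero [simp]: "0 \<in> exps n"
  by (simp add: exps_def)

lemma exps_add: "\<alpha> \<in> exps n \<Longrightarrow> \<beta> \<in> exps n \<Longrightarrow> \<alpha> + \<beta> \<in> exps n"
  unfolding exps_def using keys_add[of \<alpha> \<beta>] by auto

lemma exps_sum_single: "S \<subseteq> {..<n} \<Longrightarrow> (\<Sum>j\<in>S. single j (e j)) \<in> exps n"
  using keys_sum[of "\<lambda>j. single j (e j)" S] by (auto simp: exps_def)

lemma lookup_eq_0_if_exps: "\<alpha> \<in> exps n \<Longrightarrow> n \<le> i \<Longrightarrow> lookup \<alpha> i = 0"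
  by (auto simp: exps_def in_keys_iff)

lemma poly_in_vars_iff: "poly_in_vars n q \<longleftrightarrow> keys q \<subseteq> exps n"
  by (auto simp: poly_in_vars_def exps_def)

lemma poly_in_vars_zero [simp]: "poly_in_vars n 0"
  by (simp add: poly_in_vars_def)

lemma poly_in_vars_one [simp]: "poly_in_vars n 1"
  by (simp add: poly_in_vars_iff)

lemma poly_in_vars_single: "\<alpha> \<in> exps n \<Longrightarrow> poly_in_vars n (single \<alpha> c)"
  by (simp add: poly_in_vars_iff)

lemma poly_in_vars_add: "poly_in_vars n p \<Longrightarrow> poly_in_vars n q \<Longrightarrow> poly_in_vars n (p + q)"
  unfolding poly_in_vars_iff using keys_add[of p q] by auto

lemma poly_in_vars_diff: "poly_in_vars n p \<Longrightarrow> poly_in_vars n q \<Longrightarrow> poly_in_vars n (p - q)"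
  unfolding poly_in_vars_iff using keys_diff[of p q] by auto

lemma poly_in_vars_sum:
  "(\<And>i. i \<in> S \<Longrightarrow> poly_in_vars n (f i)) \<Longrightarrow> poly_in_vars n (\<Sum>i\<in>S. f i)"
  by (induction S rule: infinite_finite_induct) (auto intro: poly_in_vars_add)

lemma poly_in_vars_mult:
  assumes "poly_in_vars n p" "poly_in_vars n q"
  shows "poly_in_vars n (p * q)"
  unfolding poly_in_vars_iff
proof
  fix \<gamma> assume "\<gamma> \<in> keys (p * q)"
  then obtain \<alpha> \<beta> where "\<gamma> = \<alpha> + \<beta>" "\<alpha> \<in> keys p" "\<beta> \<in> keys q"
    using keys_mult[of p q] by auto
  then show "\<gamma> \<in> exps n"
    using assms by (auto simp: poly_in_vars_iff intro!: exps_add)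
qed

lemma poly_in_vars_power: "poly_in_vars n p \<Longrightarrow> poly_in_vars n (p ^ k)"
  by (induction k) (auto intro: poly_in_vars_mult)

lemma poly_in_vars_prod:
  "(\<And>i. i \<in> S \<Longrightarrow> poly_in_vars n (f i)) \<Longrightarrow> poly_in_vars n (\<Prod>i\<in>S. f i)"
  by (induction S rule: infinite_finite_induct) (auto intro: poly_in_vars_mult)

lemma peval_cong:
  "poly_in_vars n q \<Longrightarrow> (\<And>i. i < n \<Longrightarrow> z i = w i) \<Longrightarrow> peval q z = peval q w"
  unfolding peval_eq
  by (intro sum.cong refl arg_cong2[where f = "(*)"] mono_eval_cong) (auto simp: poly_in_vars_def)

section \<open>The identity theorem\<close>

lemma base_expansion_unique:
  fixes f g :: "nat \<Rightarrow> nat"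
  assumes "\<And>i. i < n \<Longrightarrow> f i < N" "\<And>i. i < n \<Longrightarrow> g i < N"
    and "(\<Sum>i<n. f i * N ^ i) = (\<Sum>i<n. g i * N ^ i)" and "i < n"
  shows "f i = g i"
  using assms
proof (induction n arbitrary: f g i)
  case (Suc n)
  let ?F = "\<Sum>i<n. f (Suc i) * N ^ i" and ?G = "\<Sum>i<n. g (Suc i) * N ^ i"
  have "f 0 + N * ?F = g 0 + N * ?G"
    using Suc.prems(3) by (simp only: sum.lessThan_Suc_shift) (simp add: sum_distrib_left mult_ac)
  moreover have "f 0 < N" "g 0 < N"
    using Suc.prems(1,2) by auto
  ultimately have head: "f 0 = g 0"
    by (metis mod_mult_self2 mod_less)
  with \<open>f 0 + N * ?F = g 0 + N * ?G\<close> \<open>f 0 < N\<close> have "?F = ?G"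
    by simp
  then have "f (Suc j) = g (Suc j)" if "j < n" for j
    using Suc.IH[of "\<lambda>i. f (Suc i)" "\<lambda>i. g (Suc i)" j] Suc.prems(1,2) that by simp
  with head show ?case
    using Suc.prems(4) by (cases i) auto
qed simp

lemma mono_eval_Kronecker:
  "\<alpha> \<in> exps n \<Longrightarrow> mono_eval \<alpha> (\<lambda>i. t ^ N ^ i) = t ^ (\<Sum>i<n. lookup \<alpha> i * N ^ i)"
  by (simp add: mono_eval_superset[of "{..<n}"] exps_def power_mult[symmetric] mult.commute power_sum)

lemma Kronecker_inj:
  assumes "\<alpha> \<in> exps n" "\<gamma> \<in> exps n" "\<And>i. i < n \<Longrightarrow> lookup \<alpha> i < N" "\<And>i. i < n \<Longrightarrow> lookup \<gamma> i < N"
    and "(\<Sum>i<n. lookup \<alpha> i * N ^ i) = (\<Sum>i<n. lookup \<gamma> i * N ^ i)"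
  shows "\<alpha> = \<gamma>"
proof (rule poly_mapping_eqI)
  show "lookup \<alpha> i = lookup \<gamma> i" for i
    using base_expansion_unique[of n "lookup \<alpha>" N "lookup \<gamma>" i] assms
    by (cases "i < n") (simp_all add: lookup_eq_0_if_exps)
qed

text \<open>Kronecker substitution \<open>z\<^sub>i = t ^ N ^ i\<close> with \<open>N\<close> exceeding every exponent turns distinct
  monomials into distinct powers of \<open>t\<close>, reducing the claim to one variable.\<close>
lemma mono_eval_independent:
  fixes c :: "(nat \<Rightarrow>\<^sub>0 nat) \<Rightarrow> 'a::{idom, ring_char_0}"
  assumes K: "finite K" "K \<subseteq> exps n" and vanish: "\<And>z. (\<Sum>\<alpha>\<in>K. c \<alpha> * mono_eval \<alpha> z) = 0"
    and "\<beta> \<in> K"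
  shows "c \<beta> = 0"
proof -
  define N where "N = Suc (\<Sum>\<alpha>\<in>K. \<Sum>i<n. lookup \<alpha> i)"
  have lt: "lookup \<alpha> i < N" if "\<alpha> \<in> K" "i < n" for \<alpha> i
  proof -
    have "lookup \<alpha> i \<le> (\<Sum>i<n. lookup \<alpha> i)"
      using that by (intro member_le_sum) auto
    also have "\<dots> \<le> (\<Sum>\<alpha>\<in>K. \<Sum>i<n. lookup \<alpha> i)"
      using that K by (intro member_le_sum) auto
    finally show ?thesis by (simp add: N_def)
  qed
  define enc where "enc \<alpha> = (\<Sum>i<n. lookup \<alpha> i * N ^ i)" for \<alpha>
  define P where "P = (\<Sum>\<alpha>\<in>K. Polynomial.monom (c \<alpha>) (enc \<alpha>))"
  have "poly P t = (\<Sum>\<alpha>\<in>K. c \<alpha> * mono_eval \<alpha> (\<lambda>i. t ^ N ^ i))" for t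
    unfolding P_def poly_sum poly_monom using K(2)
    by (intro sum.cong) (auto simp: enc_def mono_eval_Kronecker)
  then have "poly P t = 0" for t
    using vanish by simp
  then have "P = 0"
    using poly_all_0_iff_0 by blast
  have enc_inj: "\<alpha> = \<beta>" if "\<alpha> \<in> K" "enc \<alpha> = enc \<beta>" for \<alpha>
    using Kronecker_inj[of \<alpha> n \<beta> N] that \<open>\<beta> \<in> K\<close> K(2) lt by (auto simp: enc_def)
  have "Polynomial.coeff P (enc \<beta>) = (\<Sum>\<alpha>\<in>K. if \<alpha> = \<beta> then c \<alpha> else 0)"
    unfolding P_def coeff_sum coeff_monom by (intro sum.cong) (auto dest: enc_inj)
  with \<open>P = 0\<close> \<open>\<beta> \<in> K\<close> K(1) show ?thesis
    by simp
qed

lemma peval_inject: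
  assumes "poly_in_vars n p" "poly_in_vars n q" "\<And>z. peval p z = peval q z"
  shows "p = q"
proof -
  have "lookup (p - q) \<alpha> = 0" if "\<alpha> \<in> keys (p - q)" for \<alpha>
  proof (rule mono_eval_independent)
    show "keys (p - q) \<subseteq> exps n"
      using poly_in_vars_diff[OF assms(1,2)] by (simp add: poly_in_vars_iff)
    show "(\<Sum>\<alpha>\<in>keys (p - q). lookup (p - q) \<alpha> * mono_eval \<alpha> z) = 0" for z
      using assms(3) by (simp add: peval_eq[symmetric] peval_diff)
  qed (use that in auto)
  then show ?thesis
    by (metis in_keys_iff eq_iff_diff_eq_0 poly_mapping_eqI lookup_zero)
qed

section \<open>Evaluation of polynomials at commuting operators\<close>

lemma scaleC_zero_right [simp]: "c *\<^sub>C (0::'h::complex_inner) = 0"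
  by (metis add_cancel_right_right scaleC_add_right)

lemma scaleC_zero_left [simp]: "0 *\<^sub>C (x::'h::complex_inner) = 0"
  by (metis add_cancel_right_right add_0 scaleC_add_left)

lemma scaleC_sum_right: "c *\<^sub>C (\<Sum>i\<in>S. f i) = (\<Sum>i\<in>S. c *\<^sub>C (f i::'h::complex_inner))"
  by (induction S rule: infinite_finite_induct) (auto simp: scaleC_add_right)

lemma cinner_scaleC_right: "cinner x (c *\<^sub>C y) = c * cinner x (y::'h::complex_inner)"
  by (metis cinner_commute cinner_scaleC_left complex_cnj_cnj complex_cnj_mult)

lemma norm_scaleC: "norm (c *\<^sub>C (x::'h::complex_inner)) = cmod c * norm x"
proof -
  have "complex_of_real ((norm (c *\<^sub>C x))\<^sup>2) = cnj c * c * complex_of_real ((norm x)\<^sup>2)"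
    by (metis cinner_self_norm cinner_scaleC_left cinner_scaleC_right mult.assoc)
  also have "cnj c * c = complex_of_real ((cmod c)\<^sup>2)"
    by (metis complex_norm_square mult.commute)
  finally have "(norm (c *\<^sub>C x))\<^sup>2 = (cmod c * norm x)\<^sup>2"
    by (metis of_real_eq_iff of_real_mult power_mult_distrib)
  then show ?thesis
    by (simp add: power2_eq_iff_nonneg)
qed

lemma bounded_linear_scaleC: "bounded_linear (\<lambda>x::'h::complex_inner. c *\<^sub>C x)"
proof (rule bounded_linear_intro[where K = "cmod c"])
  show "c *\<^sub>C (x + y) = c *\<^sub>C x + c *\<^sub>C y" for x y :: 'h
    by (simp add: scaleC_add_right)
  show "c *\<^sub>C (r *\<^sub>R x) = r *\<^sub>R (c *\<^sub>C x)" for r and x :: 'h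
    by (metis scaleC_of_real scaleC_scaleC mult.commute)
  show "norm (c *\<^sub>C x) \<le> norm x * cmod c" for x :: 'h
    by (simp add: norm_scaleC mult.commute)
qed

lemma bounded_clinear_op_id: "bounded_clinear_op (id::'h::complex_inner \<Rightarrow> 'h)"
  by (simp add: bounded_clinear_op_def id_def)

lemma bounded_clinear_op_comp:
  "bounded_clinear_op f \<Longrightarrow> bounded_clinear_op g \<Longrightarrow> bounded_clinear_op (f \<circ> g)"
  unfolding bounded_clinear_op_def o_def by (auto intro: bounded_linear_compose)

lemma bounded_clinear_op_funpow: "bounded_clinear_op f \<Longrightarrow> bounded_clinear_op (f ^^ k)"
  by (induction k) (auto intro: bounded_clinear_op_comp bounded_clinear_op_id)

lemma bounded_clinear_op_scaleC: "bounded_clinear_op f \<Longrightarrow> bounded_clinear_op (\<lambda>x. c *\<^sub>C f x)"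
  unfolding bounded_clinear_op_def
  by (auto intro: bounded_linear_compose[OF bounded_linear_scaleC] simp: scaleC_scaleC mult.commute)

lemma bounded_clinear_op_sum:
  "(\<And>i. i \<in> S \<Longrightarrow> bounded_clinear_op (f i)) \<Longrightarrow> bounded_clinear_op (\<lambda>x. \<Sum>i\<in>S. f i x)"
  unfolding bounded_clinear_op_def by (auto intro!: bounded_linear_sum simp: scaleC_sum_right)

lemma bounded_clinear_op_map_scaleC: "bounded_clinear_op f \<Longrightarrow> f (c *\<^sub>C x) = c *\<^sub>C f x"
  unfolding bounded_clinear_op_def by blast

lemma bounded_clinear_op_map_sum: "bounded_clinear_op f \<Longrightarrow> f (\<Sum>i\<in>S. g i) = (\<Sum>i\<in>S. f (g i))"
  unfolding bounded_clinear_op_def by (auto intro: linear_sum bounded_linear.linear)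

lemma funpow_commute: "(\<And>x. f (g x) = g (f x)) \<Longrightarrow> (f ^^ k) (g x) = g ((f ^^ k) x)"
  by (induction k arbitrary: x) auto

definition mono_op_list :: "(nat \<Rightarrow> 'h \<Rightarrow> 'h) \<Rightarrow> (nat \<Rightarrow>\<^sub>0 nat) \<Rightarrow> nat list \<Rightarrow> 'h \<Rightarrow> 'h" where
  "mono_op_list T \<alpha> is = foldr (\<lambda>i f. (T i ^^ lookup \<alpha> i) \<circ> f) is id"

lemma mono_op_list_Nil [simp]: "mono_op_list T \<alpha> [] = id"
  by (simp add: mono_op_list_def)

lemma mono_op_list_Cons [simp]: "mono_op_list T \<alpha> (i # is) = (T i ^^ lookup \<alpha> i) \<circ> mono_op_list T \<alpha> is"
  by (simp add: mono_op_list_def)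

lemma mono_op_list_commute:
  "(\<And>j x. j \<in> set is \<Longrightarrow> g (T j x) = T j (g x)) \<Longrightarrow> g (mono_op_list T \<alpha> is x) = mono_op_list T \<alpha> is (g x)"
proof (induction "is" arbitrary: x)
  case (Cons i "is")
  have "g ((T i ^^ lookup \<alpha> i) y) = (T i ^^ lookup \<alpha> i) (g y)" for y
    using funpow_commute[of "T i" g] Cons.prems by simp
  then show ?case
    using Cons by simp
qed simp

lemma mono_op_list_add:
  assumes "\<And>i j x. i \<in> set is \<Longrightarrow> j \<in> set is \<Longrightarrow> T i (T j x) = T j (T i x)"
  shows "mono_op_list T (\<alpha> + \<beta>) is x = mono_op_list T \<alpha> is (mono_op_list T \<beta> is x)"
  using assms
proof (induction "is" arbitrary: x)
  case (Cons i "is")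
  have "(T i ^^ lookup \<beta> i) (mono_op_list T \<alpha> is y) = mono_op_list T \<alpha> is ((T i ^^ lookup \<beta> i) y)" for y
    by (rule mono_op_list_commute, rule funpow_commute) (use Cons.prems in auto)
  then show ?case
    using Cons by (simp add: lookup_add funpow_add)
qed simp

lemma mono_op_list_filter:
  "(\<And>i. i \<in> set is \<Longrightarrow> \<not> P i \<Longrightarrow> lookup \<alpha> i = 0) \<Longrightarrow> mono_op_list T \<alpha> (filter P is) = mono_op_list T \<alpha> is"
  by (induction "is") auto

lemma bounded_clinear_op_mono_op_list:
  "(\<And>i. i \<in> set is \<Longrightarrow> bounded_clinear_op (T i)) \<Longrightarrow> bounded_clinear_op (mono_op_list T \<alpha> is)"
  by (induction "is") (auto intro!: bounded_clinear_op_comp bounded_clinear_op_funpow bounded_clinear_op_id)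

lemma mono_op_eq_upt: "\<alpha> \<in> exps n \<Longrightarrow> mono_op T \<alpha> = mono_op_list T \<alpha> [0..<n]"
proof -
  assume "\<alpha> \<in> exps n"
  then have "keys \<alpha> = set (filter (\<lambda>i. i \<in> keys \<alpha>) [0..<n])"
    by (auto simp: exps_def)
  then have "sorted_list_of_set (keys \<alpha>) = filter (\<lambda>i. i \<in> keys \<alpha>) [0..<n]"
    by (metis sorted_list_of_set.idem_if_sorted_distinct sorted_wrt_filter sorted_upt distinct_filter
        distinct_upt)
  then have "mono_op T \<alpha> = mono_op_list T \<alpha> (filter (\<lambda>i. i \<in> keys \<alpha>) [0..<n])"
    by (simp add: mono_op_def mono_op_list_def)
  also have "\<dots> = mono_op_list T \<alpha> [0..<n]"
    by (rule mono_op_list_filter) (simp add: in_keys_iff)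
  finally show ?thesis .
qed

lemma mono_op_zero [simp]: "mono_op T 0 = id"
  by (simp add: mono_op_def)

lemma commuting_tupleD: "commuting_tuple n T \<Longrightarrow> i < n \<Longrightarrow> j < n \<Longrightarrow> T i (T j x) = T j (T i x)"
  unfolding commuting_tuple_def by (metis comp_apply)

lemma mono_op_add:
  assumes "commuting_tuple n T" "\<alpha> \<in> exps n" "\<beta> \<in> exps n"
  shows "mono_op T (\<alpha> + \<beta>) x = mono_op T \<alpha> (mono_op T \<beta> x)"
  using mono_op_list_add[of "[0..<n]" T \<alpha> \<beta> x] commuting_tupleD[OF assms(1)]
  by (simp add: mono_op_eq_upt[OF assms(2)] mono_op_eq_upt[OF assms(3)]
      mono_op_eq_upt[OF exps_add[OF assms(2,3)]])

lemma bounded_clinear_op_mono_op: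
  assumes "commuting_tuple n T" "\<alpha> \<in> exps n"
  shows "bounded_clinear_op (mono_op T \<alpha>)"
  unfolding mono_op_eq_upt[OF assms(2)]
  by (rule bounded_clinear_op_mono_op_list) (use assms(1) in \<open>simp add: commuting_tuple_def\<close>)

lemma opeval_superset:
  "finite K \<Longrightarrow> keys q \<subseteq> K \<Longrightarrow> opeval q T x = (\<Sum>\<alpha>\<in>K. lookup q \<alpha> *\<^sub>C mono_op T \<alpha> x)"
  unfolding opeval_def by (rule sum.mono_neutral_left) (auto simp: in_keys_iff)

lemma opeval_zero [simp]: "opeval 0 T x = 0"
  by (simp add: opeval_def)

lemma opeval_one [simp]: "opeval 1 T x = x"
  by (simp add: opeval_def scaleC_one)

lemma opeval_single [simp]: "opeval (single \<alpha> c) T x = c *\<^sub>C mono_op T \<alpha> x"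
  by (simp add: opeval_def)

lemma opeval_add: "opeval (p + q) T x = opeval p T x + opeval q T x"
proof -
  let ?K = "keys p \<union> keys q"
  have "opeval (p + q) T x
      = (\<Sum>\<alpha>\<in>?K. lookup p \<alpha> *\<^sub>C mono_op T \<alpha> x) + (\<Sum>\<alpha>\<in>?K. lookup q \<alpha> *\<^sub>C mono_op T \<alpha> x)"
    by (subst opeval_superset[of ?K]) (auto simp: keys_add lookup_add scaleC_add_left sum.distrib)
  then show ?thesis
    by (simp add: opeval_superset[of ?K p] opeval_superset[of ?K q])
qed

lemma opeval_sum: "opeval (\<Sum>j\<in>S. f j) T x = (\<Sum>j\<in>S. opeval (f j) T x)"
  by (induction S rule: infinite_finite_induct) (auto simp: opeval_add)

lemma bounded_clinear_op_opeval:
  "commuting_tuple n T \<Longrightarrow> poly_in_vars n q \<Longrightarrow> bounded_clinear_op (opeval q T)"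
  unfolding opeval_def poly_in_vars_iff
  by (intro bounded_clinear_op_sum bounded_clinear_op_scaleC bounded_clinear_op_mono_op) auto

lemma opeval_mult:
  assumes T: "commuting_tuple n T" and "poly_in_vars n p" "poly_in_vars n q"
  shows "opeval (p * q) T x = opeval p T (opeval q T x)"
proof -
  have exps: "keys p \<subseteq> exps n" "keys q \<subseteq> exps n"
    using assms(2,3) by (simp_all add: poly_in_vars_iff)
  have "opeval (p * q) T x
      = (\<Sum>\<alpha>\<in>keys p. \<Sum>\<beta>\<in>keys q. (lookup p \<alpha> * lookup q \<beta>) *\<^sub>C mono_op T (\<alpha> + \<beta>) x)"
    by (simp add: times_poly_mapping_expand[of p q] opeval_sum)
  also have "\<dots> = (\<Sum>\<alpha>\<in>keys p. lookup p \<alpha> *\<^sub>C mono_op T \<alpha> (\<Sum>\<beta>\<in>keys q. lookup q \<beta> *\<^sub>C mono_op T \<beta> x))"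
  proof (intro sum.cong refl)
    fix \<alpha> assume \<alpha>: "\<alpha> \<in> keys p"
    have op: "bounded_clinear_op (mono_op T \<alpha>)"
      using \<alpha> exps by (intro bounded_clinear_op_mono_op[OF T]) auto
    have "(lookup p \<alpha> * lookup q \<beta>) *\<^sub>C mono_op T (\<alpha> + \<beta>) x
        = lookup p \<alpha> *\<^sub>C mono_op T \<alpha> (lookup q \<beta> *\<^sub>C mono_op T \<beta> x)" if "\<beta> \<in> keys q" for \<beta>
      using \<alpha> that exps
      by (simp add: mono_op_add[OF T] bounded_clinear_op_map_scaleC[OF op] scaleC_scaleC subsetD)
    then show "(\<Sum>\<beta>\<in>keys q. (lookup p \<alpha> * lookup q \<beta>) *\<^sub>C mono_op T (\<alpha> + \<beta>) x)
        = lookup p \<alpha> *\<^sub>C mono_op T \<alpha> (\<Sum>\<beta>\<in>keys q. lookup q \<beta> *\<^sub>C mono_op T \<beta> x)"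
      by (simp add: bounded_clinear_op_map_sum[OF op] scaleC_sum_right)
  qed
  also have "\<dots> = opeval p T (opeval q T x)"
    by (simp add: opeval_def)
  finally show ?thesis .
qed

lemma opeval_power:
  assumes "commuting_tuple n T" "poly_in_vars n p"
  shows "opeval (p ^ k) T x = (opeval p T ^^ k) x"
  by (induction k arbitrary: x) (simp_all add: opeval_mult[OF assms poly_in_vars_power[OF assms(2)]])

lemma opeval_prod_list:
  assumes T: "commuting_tuple n T" and h: "\<And>k. k \<in> set ks \<Longrightarrow> poly_in_vars n (h k)"
  shows "opeval (prod_list (map h ks)) T x = foldr (\<lambda>k f. opeval (h k) T \<circ> f) ks id x"
  using h
proof (induction ks arbitrary: x)
  case (Cons k ks)
  have "poly_in_vars n (prod_list (map h ks))"
    using Cons.prems by (induction ks) (auto intro: poly_in_vars_mult)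
  then show ?case
    using Cons opeval_mult[OF T Cons.prems[of k]] by simp
qed simp

lemma commuting_tuple_opeval:
  assumes T: "commuting_tuple n T" and g: "\<And>k. k < n \<Longrightarrow> poly_in_vars n (g k)"
  shows "commuting_tuple n (\<lambda>k. opeval (g k) T)"
  unfolding commuting_tuple_def
proof (intro conjI allI impI)
  show "bounded_clinear_op (opeval (g i) T)" if "i < n" for i
    using bounded_clinear_op_opeval[OF T g] that .
  show "opeval (g i) T \<circ> opeval (g j) T = opeval (g j) T \<circ> opeval (g i) T" if "i < n" "j < n" for i j
    using opeval_mult[OF T g g, of i j] opeval_mult[OF T g g, of j i] that
    by (auto simp: fun_eq_iff mult.commute)
qed

section \<open>Substitution of polynomials into polynomials\<close>

definition mono_subst :: "('i \<Rightarrow> 'a::comm_monoid_mult) \<Rightarrow> ('i \<Rightarrow>\<^sub>0 nat) \<Rightarrow> 'a" where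
  "mono_subst g \<alpha> = (\<Prod>k\<in>keys \<alpha>. g k ^ lookup \<alpha> k)"

definition psubst ::
  "(('i \<Rightarrow>\<^sub>0 nat) \<Rightarrow>\<^sub>0 'a::comm_semiring_1) \<Rightarrow> ('i \<Rightarrow> ('j \<Rightarrow>\<^sub>0 nat) \<Rightarrow>\<^sub>0 'a) \<Rightarrow> ('j \<Rightarrow>\<^sub>0 nat) \<Rightarrow>\<^sub>0 'a"
  where "psubst f g = (\<Sum>\<alpha>\<in>keys f. single 0 (lookup f \<alpha>) * mono_subst g \<alpha>)"

lemma psubst_superset:
  "finite K \<Longrightarrow> keys f \<subseteq> K \<Longrightarrow> psubst f g = (\<Sum>\<alpha>\<in>K. single 0 (lookup f \<alpha>) * mono_subst g \<alpha>)"
  unfolding psubst_def by (rule sum.mono_neutral_left) (auto simp: in_keys_iff)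

lemma psubst_zero [simp]: "psubst 0 g = 0"
  by (simp add: psubst_def)

lemma psubst_single: "psubst (single \<gamma> c) g = single 0 c * mono_subst g \<gamma>"
  by (subst psubst_superset[of "{\<gamma>}"]) auto

lemma psubst_add: "psubst (f + h) g = psubst f g + psubst h g"
proof -
  let ?K = "keys f \<union> keys h"
  have "psubst (f + h) g
      = (\<Sum>\<alpha>\<in>?K. single 0 (lookup f \<alpha>) * mono_subst g \<alpha>) + (\<Sum>\<alpha>\<in>?K. single 0 (lookup h \<alpha>) * mono_subst g \<alpha>)"
    by (subst psubst_superset[of ?K]) (auto simp: keys_add lookup_add single_add distrib_right sum.distrib)
  then show ?thesis
    by (simp add: psubst_superset[of ?K f] psubst_superset[of ?K h])
qed

lemma peval_psubst: "peval (psubst f g) z = peval f (\<lambda>k. peval (g k) z)"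
  by (simp add: psubst_def mono_subst_def peval_sum peval_mult peval_prod peval_power peval_eq[of f]
      mono_eval_def)

lemma poly_in_vars_psubst:
  "poly_in_vars n f \<Longrightarrow> (\<And>k. k < n \<Longrightarrow> poly_in_vars n (g k)) \<Longrightarrow> poly_in_vars n (psubst f g)"
  unfolding psubst_def mono_subst_def
  by (intro poly_in_vars_sum poly_in_vars_mult poly_in_vars_single poly_in_vars_prod poly_in_vars_power)
    (auto simp: poly_in_vars_def)

lemma opeval_mono_subst:
  assumes T: "commuting_tuple n T" and g: "\<And>k. k < n \<Longrightarrow> poly_in_vars n (g k)" and "\<alpha> \<in> exps n"
  shows "opeval (mono_subst g \<alpha>) T x = mono_op (\<lambda>k. opeval (g k) T) \<alpha> x"
proof -
  let ?ks = "sorted_list_of_set (keys \<alpha>)"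
  have ks: "k < n" if "k \<in> set ?ks" for k
    using that \<open>\<alpha> \<in> exps n\<close> by (auto simp: exps_def)
  have "mono_subst g \<alpha> = prod_list (map (\<lambda>k. g k ^ lookup \<alpha> k) ?ks)"
    by (simp add: mono_subst_def prod.distinct_set_conv_list[symmetric])
  then have "opeval (mono_subst g \<alpha>) T x = foldr (\<lambda>k f. opeval (g k ^ lookup \<alpha> k) T \<circ> f) ?ks id x"
    using opeval_prod_list[OF T, of ?ks "\<lambda>k. g k ^ lookup \<alpha> k"] ks by (auto intro: poly_in_vars_power g)
  also have "foldr (\<lambda>k f. opeval (g k ^ lookup \<alpha> k) T \<circ> f) ?ks id
      = foldr (\<lambda>k f. (opeval (g k) T ^^ lookup \<alpha> k) \<circ> f) ?ks id"
    using opeval_power[OF T g] ks by (intro foldr_cong refl) (auto simp: fun_eq_iff)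
  finally show ?thesis
    by (simp add: mono_op_def)
qed

lemma opeval_psubst:
  assumes T: "commuting_tuple n T" and f: "poly_in_vars n f" and g: "\<And>k. k < n \<Longrightarrow> poly_in_vars n (g k)"
  shows "opeval (psubst f g) T x = opeval f (\<lambda>k. opeval (g k) T) x"
proof -
  have exps: "\<alpha> \<in> exps n" if "\<alpha> \<in> keys f" for \<alpha>
    using f that by (auto simp: poly_in_vars_iff)
  have mono_subst: "poly_in_vars n (mono_subst g \<alpha>)" if "\<alpha> \<in> keys f" for \<alpha>
    using exps[OF that] unfolding mono_subst_def exps_def
    by (intro poly_in_vars_prod poly_in_vars_power g) auto
  have "opeval (psubst f g) T x = (\<Sum>\<alpha>\<in>keys f. lookup f \<alpha> *\<^sub>C opeval (mono_subst g \<alpha>) T x)"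
    unfolding psubst_def opeval_sum
    by (intro sum.cong refl) (simp add: opeval_mult[OF T poly_in_vars_single mono_subst])
  also have "\<dots> = opeval f (\<lambda>k. opeval (g k) T) x"
    unfolding opeval_def[of f] by (intro sum.cong refl) (simp add: opeval_mono_subst[OF T g exps])
  finally show ?thesis .
qed

definition ksubsets :: "nat \<Rightarrow> nat \<Rightarrow> nat set set" where
  "ksubsets n k = {S. S \<subseteq> {..<n} \<and> card S = k}"

lemma finite_ksubsets [simp]: "finite (ksubsets n k)"
  unfolding ksubsets_def by (rule finite_subset[of _ "Pow {..<n}"]) auto

lemma permutes_image_ksubsets:
  assumes \<sigma>: "\<sigma> permutes {..<n}"
  shows "(\<lambda>S. \<sigma> ` S) ` ksubsets n k = ksubsets n k"
proof -
  have image: "\<tau> ` S \<in> ksubsets n k" if "\<tau> permutes {..<n}" "S \<in> ksubsets n k" for \<tau> S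
    using that permutes_image[OF that(1)] card_image[OF permutes_inj_on[OF that(1)]]
    by (auto simp: ksubsets_def)
  have "T \<in> (\<lambda>S. \<sigma> ` S) ` ksubsets n k" if "T \<in> ksubsets n k" for T
    using image[OF permutes_inv[OF \<sigma>] that] permutes_inverses(1)[OF \<sigma>]
    by (auto simp: image_image intro!: image_eqI[where x = "inv \<sigma> ` T"])
  with image[OF \<sigma>] show ?thesis
    by blast
qed

lemma theta_poly_less:
  "Suc k < n \<Longrightarrow> theta_poly m p n k = (\<Sum>S\<in>ksubsets n (Suc k). single (\<Sum>j\<in>S. single j m) 1)"
  by (simp add: theta_poly_def ksubsets_def)

lemma theta_poly_last: "Suc k = n \<Longrightarrow> theta_poly m p n k = single (\<Sum>j<n. single j (m div p)) 1"
  by (simp add: theta_poly_def)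

lemma theta_poly_beyond: "n \<le> k \<Longrightarrow> theta_poly m p n k = 0"
  by (simp add: theta_poly_def)

lemma poly_in_vars_theta_poly: "poly_in_vars n (theta_poly m p n k)"
proof -
  consider "Suc k < n" | "Suc k = n" | "n \<le> k"
    by linarith
  then show ?thesis
  proof cases
    case 1
    then show ?thesis
      unfolding theta_poly_less[OF 1]
      by (intro poly_in_vars_sum poly_in_vars_single exps_sum_single) (auto simp: ksubsets_def)
  next
    case 2
    then show ?thesis
      unfolding theta_poly_last[OF 2] by (intro poly_in_vars_single exps_sum_single) auto
  qed (simp add: theta_poly_beyond)
qed

lemma matvec_Gmpn:
  assumes "\<sigma> permutes {..<n}" and "\<forall>i j. A i j = (if i < n \<and> j < n \<and> j = \<sigma> i then \<zeta> i else 0)"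
  shows "matvec n A z i = (if i < n then \<zeta> i * z (\<sigma> i) else 0)"
proof (cases "i < n")
  case True
  then have "\<sigma> i < n"
    using permutes_in_image[OF assms(1)] by auto
  moreover have "matvec n A z i = (\<Sum>j<n. if j = \<sigma> i then \<zeta> i * z j else 0)"
    unfolding matvec_def using assms(2) True by (intro sum.cong) auto
  ultimately show ?thesis
    using True by simp
qed (simp add: matvec_def assms(2))

lemma theta_matvec_Gmpn:
  assumes "A \<in> Gmpn m p n"
  shows "theta m p n (matvec n A z) = theta m p n z"
proof
  obtain \<sigma> \<zeta> where \<sigma>: "\<sigma> permutes {..<n}"
    and A: "\<forall>i j. A i j = (if i < n \<and> j < n \<and> j = \<sigma> i then \<zeta> i else 0)"
    and root: "\<forall>i<n. \<zeta> i ^ m = 1" and det: "(\<Prod>i<n. \<zeta> i) ^ (m div p) = 1"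
    using assms unfolding Gmpn_def by blast
  note Az = matvec_Gmpn[OF \<sigma> A]
  fix k
  consider "Suc k < n" | "Suc k = n" | "n \<le> k"
    by linarith
  then show "theta m p n (matvec n A z) k = theta m p n z k"
  proof cases
    case 1
    have "(\<Sum>S\<in>ksubsets n (Suc k). \<Prod>j\<in>S. matvec n A z j ^ m)
        = (\<Sum>S\<in>ksubsets n (Suc k). \<Prod>j\<in>\<sigma> ` S. z j ^ m)"
      using root
      by (intro sum.cong refl) (auto simp: prod.reindex[OF permutes_inj_on[OF \<sigma>]] Az
          power_mult_distrib ksubsets_def intro!: prod.cong)
    also have "\<dots> = (\<Sum>S\<in>(\<lambda>S. \<sigma> ` S) ` ksubsets n (Suc k). \<Prod>j\<in>S. z j ^ m)"
      by (rule sum.reindex[symmetric, unfolded o_def])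
        (meson inj_image_eq_iff inj_onI permutes_inj[OF \<sigma>])
    finally show ?thesis
      using 1 by (simp add: theta_def theta_poly_less peval_sum mono_eval_sum
          permutes_image_ksubsets[OF \<sigma>])
  next
    case 2
    have "(\<Prod>j<n. matvec n A z j ^ (m div p)) = (\<Prod>j<n. \<zeta> j) ^ (m div p) * (\<Prod>j<n. z (\<sigma> j) ^ (m div p))"
      by (simp add: Az power_mult_distrib prod.distrib prod_power_distrib)
    also have "\<dots> = (\<Prod>j<n. z j ^ (m div p))"
      using det prod.permute[OF \<sigma>, of "\<lambda>j. z j ^ (m div p)"] by (simp add: o_def)
    finally show ?thesis
      using 2 by (simp add: theta_def theta_poly_last mono_eval_sum)
  qed (simp add: theta_def theta_poly_beyond)
qed

lemma G_invariant_psubst_theta: "G_invariant m p n (psubst f (theta_poly m p n))"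
  by (simp add: G_invariant_def peval_psubst theta_def[symmetric] theta_matvec_Gmpn)

lemma G_invariant_diff: "G_invariant m p n q \<Longrightarrow> G_invariant m p n r \<Longrightarrow> G_invariant m p n (q - r)"
  by (simp add: G_invariant_def peval_diff)

section \<open>Constraints on the exponents of an invariant polynomial\<close>

lemma G_invariant_apply:
  assumes "G_invariant m p n q" "poly_in_vars n q" "\<sigma> permutes {..<n}"
    and "\<And>i. i < n \<Longrightarrow> \<zeta> i ^ m = 1" "(\<Prod>i<n. \<zeta> i) ^ (m div p) = 1"
  shows "peval q (\<lambda>i. \<zeta> i * z (\<sigma> i)) = peval q z"
proof -
  define A where "A = (\<lambda>i j. if i < n \<and> j < n \<and> j = \<sigma> i then \<zeta> i else (0::complex))"
  have "A \<in> Gmpn m p n"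
    unfolding Gmpn_def using assms(3-5) by (auto simp: A_def)
  moreover have "peval q (matvec n A z) = peval q (\<lambda>i. \<zeta> i * z (\<sigma> i))"
    using matvec_Gmpn[OF assms(3), of A \<zeta>] by (intro peval_cong[OF assms(2)]) (simp add: A_def)
  ultimately show ?thesis
    using assms(1) unfolding G_invariant_def by metis
qed

lemma G_invariant_diag:
  fixes \<zeta> :: "nat \<Rightarrow> complex"
  assumes "G_invariant m p n q" "poly_in_vars n q"
    and "\<And>i. i < n \<Longrightarrow> \<zeta> i ^ m = 1" "(\<Prod>i<n. \<zeta> i) ^ (m div p) = 1"
    and "\<alpha> \<in> keys q"
  shows "mono_eval \<alpha> \<zeta> = 1"
proof -
  have "(\<Sum>\<alpha>\<in>keys q. (lookup q \<alpha> * (mono_eval \<alpha> \<zeta> - 1)) * mono_eval \<alpha> z) = 0" for z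
  proof -
    have "(\<Sum>\<alpha>\<in>keys q. (lookup q \<alpha> * (mono_eval \<alpha> \<zeta> - 1)) * mono_eval \<alpha> z)
        = peval q (\<lambda>i. \<zeta> i * z i) - peval q z"
      by (simp add: peval_eq mono_eval_mult algebra_simps sum_subtractf)
    also have "peval q (\<lambda>i. \<zeta> i * z i) = peval q z"
      using G_invariant_apply[OF assms(1,2) permutes_id assms(3,4)] by simp
    finally show ?thesis
      by simp
  qed
  then have "lookup q \<alpha> * (mono_eval \<alpha> \<zeta> - 1) = 0"
    using assms(2,5) mono_eval_independent[of "keys q" n "\<lambda>\<beta>. lookup q \<beta> * (mono_eval \<beta> \<zeta> - 1)" \<alpha>]
    by (auto simp: poly_in_vars_iff)
  then show ?thesis
    using assms(5) by (simp add: in_keys_iff)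
qed

definition unit_root :: "nat \<Rightarrow> complex" where
  "unit_root m = exp (2 * of_real pi * \<i> / of_nat m)"

lemma unit_root_power_eq_1_iff: "0 < m \<Longrightarrow> unit_root m ^ k = 1 \<longleftrightarrow> m dvd k"
  using complex_root_unity_eq_1[of m k]
  by (simp add: unit_root_def exp_of_nat_mult[symmetric] field_simps)

lemma mono_eval_powers:
  "\<alpha> \<in> exps n \<Longrightarrow> mono_eval \<alpha> (\<lambda>j. w ^ e j) = w ^ (\<Sum>j<n. e j * lookup \<alpha> j)"
  by (simp add: mono_eval_superset[of "{..<n}"] exps_def power_mult power_sum)

lemma G_invariant_keys_mod:
  assumes "0 < m" "G_invariant m p n q" "poly_in_vars n q" "\<alpha> \<in> keys q" "i < n"
  shows "lookup \<alpha> i mod m = lookup \<alpha> 0 mod m"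
proof (cases "i = 0")
  case False
  define e where "e j = (if j = i then 1 else if j = 0 then m - 1 else 0)" for j
  have \<alpha>: "\<alpha> \<in> exps n"
    using assms(3,4) by (auto simp: poly_in_vars_iff)
  have sum_e: "(\<Sum>j<n. e j * f j) = f i + (m - 1) * f 0" for f :: "nat \<Rightarrow> nat"
    using False assms(5) by (simp add: e_def if_distrib[of "\<lambda>x. x * _"] sum.If_cases Int_absorb1)
  have "mono_eval \<alpha> (\<lambda>j. unit_root m ^ e j) = 1"
  proof (rule G_invariant_diag[OF assms(2,3) _ _ assms(4)])
    show "(unit_root m ^ e j) ^ m = 1" for j
      using assms(1) by (simp add: power_mult[symmetric] unit_root_power_eq_1_iff)
    have "(\<Prod>j<n. unit_root m ^ e j) = unit_root m ^ m"
      using assms(1) sum_e[of "\<lambda>_. 1"] by (simp add: power_sum[symmetric])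
    then show "(\<Prod>j<n. unit_root m ^ e j) ^ (m div p) = 1"
      using assms(1) by (simp add: power_mult[symmetric] unit_root_power_eq_1_iff)
  qed
  then obtain c where "lookup \<alpha> i + (m - 1) * lookup \<alpha> 0 = m * c"
    using assms(1) by (auto simp: mono_eval_powers[OF \<alpha>] sum_e unit_root_power_eq_1_iff)
  then have "lookup \<alpha> i + m * lookup \<alpha> 0 = m * c + lookup \<alpha> 0"
    using assms(1) by (cases m) (auto simp: algebra_simps)
  then show ?thesis
    by (metis mod_mult_self2 mod_mult_self1_is_0 add.commute mod_add_cong mult.commute add_0)
qed simp

lemma G_invariant_keys_dvd:
  assumes "0 < m" "0 < p" "p dvd m" "G_invariant m p n q" "poly_in_vars n q" "\<alpha> \<in> keys q" "0 < n"
  shows "m div p dvd lookup \<alpha> 0"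
proof -
  define e where "e j = (if j = 0 then p else 0)" for j :: nat
  have \<alpha>: "\<alpha> \<in> exps n"
    using assms(5,6) by (auto simp: poly_in_vars_iff)
  have m: "p * (m div p) = m"
    using assms(3) by simp
  have "mono_eval \<alpha> (\<lambda>j. unit_root m ^ e j) = 1"
  proof (rule G_invariant_diag[OF assms(4,5) _ _ assms(6)])
    show "(unit_root m ^ e j) ^ m = 1" for j
      using assms(1) by (simp add: power_mult[symmetric] unit_root_power_eq_1_iff)
    have "(\<Prod>j<n. unit_root m ^ e j) = unit_root m ^ p"
      using assms(7) by (simp add: power_sum[symmetric] e_def)
    then show "(\<Prod>j<n. unit_root m ^ e j) ^ (m div p) = 1"
      using assms(1) m by (simp add: power_mult[symmetric] unit_root_power_eq_1_iff)
  qed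
  then have "p * (m div p) dvd p * lookup \<alpha> 0"
    using assms(1,7) m
    by (simp add: mono_eval_powers[OF \<alpha>] e_def if_distrib[of "\<lambda>x. x * _"] unit_root_power_eq_1_iff
        cong: if_cong)
  then show ?thesis
    using assms(2) by simp
qed

lemma map_key_transpose_exps:
  assumes "i < n" "j < n" "\<alpha> \<in> exps n"
  shows "Poly_Mapping.map_key (Transposition.transpose i j) \<alpha> \<in> exps n"
  using assms by (auto simp: exps_def keys_map_key Transposition.transpose_def split: if_splits)

lemma mono_eval_map_key_transpose:
  assumes "i < n" "j < n" "\<alpha> \<in> exps n"
  shows "mono_eval (Poly_Mapping.map_key (Transposition.transpose i j) \<alpha>) z
    = mono_eval \<alpha> (\<lambda>k. z (Transposition.transpose i j k))"
proof -
  let ?t = "Transposition.transpose i j"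
  have "?t permutes {..<n}"
    using assms by (intro permutes_swap_id) auto
  then have "(\<Prod>k<n. z k ^ lookup \<alpha> (?t k)) = (\<Prod>k<n. z (?t k) ^ lookup \<alpha> k)"
    using prod.permute[of ?t "{..<n}" "\<lambda>k. z (?t k) ^ lookup \<alpha> k"] by (simp add: o_def)
  then show ?thesis
    using assms map_key_transpose_exps[OF assms]
    by (simp add: mono_eval_superset[of "{..<n}"] exps_def map_key.rep_eq)
qed

lemma G_invariant_transpose:
  assumes "G_invariant m p n q" "poly_in_vars n q" "i < n" "j < n" "\<beta> \<in> keys q"
  shows "lookup q (Poly_Mapping.map_key (Transposition.transpose i j) \<beta>) = lookup q \<beta>"
proof -
  let ?t = "Transposition.transpose i j"
  let ?swap = "Poly_Mapping.map_key ?t"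
  have swap_swap: "?swap (?swap \<alpha>) = \<alpha>" for \<alpha> :: "nat \<Rightarrow>\<^sub>0 nat"
    by (simp add: map_key_compose o_def map_key_id)
  have exps: "\<alpha> \<in> exps n" if "\<alpha> \<in> keys q" for \<alpha>
    using assms(2) that by (auto simp: poly_in_vars_iff)
  define q' where "q' = (\<Sum>\<alpha>\<in>keys q. single (?swap \<alpha>) (lookup q \<alpha>))"
  have "q' = q"
  proof (rule peval_inject)
    show "poly_in_vars n q'"
      unfolding q'_def by (intro poly_in_vars_sum poly_in_vars_single map_key_transpose_exps assms exps)
    have "peval q' z = peval q (\<lambda>k. 1 * z (?t k))" for z
      unfolding q'_def peval_sum peval_eq[of q]
      by (intro sum.cong refl) (simp add: mono_eval_map_key_transpose[OF assms(3,4) exps])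
    then show "peval q' z = peval q z" for z
      using G_invariant_apply[OF assms(1,2) permutes_swap_id, of i j "\<lambda>_. 1"] assms(3,4) by simp
  qed (rule assms(2))
  moreover have "lookup q' (?swap \<beta>) = lookup q \<beta>"
  proof -
    have "lookup q' (?swap \<beta>) = (\<Sum>\<alpha>\<in>keys q. if \<alpha> = \<beta> then lookup q \<alpha> else 0)"
      unfolding q'_def lookup_sum
      by (intro sum.cong refl) (metis lookup_single swap_swap when_simps)
    then show ?thesis
      using assms(5) by simp
  qed
  ultimately show ?thesis
    by simp
qed

lemma G_invariant_max_key_antimono:
  assumes "G_invariant m p n q" "poly_in_vars n q" "\<alpha> \<in> keys q" "\<And>\<beta>. \<beta> \<in> keys q \<Longrightarrow> \<beta> \<le> \<alpha>"
    and "Suc i < n"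
  shows "lookup \<alpha> (Suc i) \<le> lookup \<alpha> i"
proof (rule ccontr)
  assume less: "\<not> lookup \<alpha> (Suc i) \<le> lookup \<alpha> i"
  let ?t = "Transposition.transpose i (Suc i)"
  let ?\<beta> = "Poly_Mapping.map_key ?t \<alpha>"
  have "lookup q ?\<beta> = lookup q \<alpha>"
    using assms by (intro G_invariant_transpose) auto
  then have "?\<beta> \<le> \<alpha>"
    using assms(3,4) by (simp add: in_keys_iff)
  moreover have "\<alpha> < ?\<beta>"
    unfolding less_poly_mapping.rep_eq less_fun_def
    using less by (intro exI[of _ i]) (auto simp: map_key.rep_eq Transposition.transpose_def)
  ultimately show False
    by simp
qed

section \<open>Leading terms in the lexicographic order\<close>

definition has_leading_term :: "('a::linorder \<Rightarrow>\<^sub>0 'b::zero) \<Rightarrow> 'a \<Rightarrow> 'b \<Rightarrow> bool" where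
  "has_leading_term P \<alpha> c \<longleftrightarrow> lookup P \<alpha> = c \<and> (\<forall>\<beta>\<in>keys P. \<beta> \<le> \<alpha>)"

lemma has_leading_term_one: "has_leading_term 1 0 1"
  by (simp add: has_leading_term_def)

lemma keys_diff_leading_term:
  assumes "has_leading_term P \<alpha> c" "\<beta> \<in> keys (P - single \<alpha> c)"
  shows "\<beta> < \<alpha>"
proof -
  have "\<beta> \<noteq> \<alpha>"
    using assms by (auto simp: has_leading_term_def in_keys_iff lookup_minus)
  moreover have "\<beta> \<in> keys P"
    using assms(2) \<open>\<beta> \<noteq> \<alpha>\<close> by (simp add: in_keys_iff lookup_minus lookup_single)
  ultimately show ?thesis
    using assms(1) by (auto simp: has_leading_term_def)
qed

lemma lookup_eq_0_if_keys_less: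
  fixes P :: "'a::preorder \<Rightarrow>\<^sub>0 'b::zero"
  shows "(\<And>\<beta>. \<beta> \<in> keys P \<Longrightarrow> \<beta> < \<alpha>) \<Longrightarrow> lookup P \<alpha> = 0"
  by (metis in_keys_iff less_irrefl)

lemma keys_mult_less_left:
  fixes P Q :: "'a::{linorder, ordered_cancel_comm_monoid_add} \<Rightarrow>\<^sub>0 'b::semiring_0"
  assumes "\<And>\<beta>. \<beta> \<in> keys P \<Longrightarrow> \<beta> < \<alpha>" "\<And>\<beta>. \<beta> \<in> keys Q \<Longrightarrow> \<beta> \<le> \<alpha>'" "\<gamma> \<in> keys (P * Q)"
  shows "\<gamma> < \<alpha> + \<alpha>'"
proof -
  obtain \<beta> \<beta>' where "\<gamma> = \<beta> + \<beta>'" "\<beta> \<in> keys P" "\<beta>' \<in> keys Q"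
    using assms(3) keys_mult[of P Q] by auto
  then show ?thesis
    using add_less_le_mono[OF assms(1,2)] by simp
qed

lemma keys_mult_less_right:
  fixes P Q :: "'a::{linorder, ordered_cancel_comm_monoid_add} \<Rightarrow>\<^sub>0 'b::semiring_0"
  assumes "\<And>\<beta>. \<beta> \<in> keys P \<Longrightarrow> \<beta> \<le> \<alpha>" "\<And>\<beta>. \<beta> \<in> keys Q \<Longrightarrow> \<beta> < \<alpha>'" "\<gamma> \<in> keys (P * Q)"
  shows "\<gamma> < \<alpha> + \<alpha>'"
proof -
  obtain \<beta> \<beta>' where "\<gamma> = \<beta> + \<beta>'" "\<beta> \<in> keys P" "\<beta>' \<in> keys Q"
    using assms(3) keys_mult[of P Q] by auto
  then show ?thesis
    using add_le_less_mono[OF assms(1,2)] by simp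
qed

lemma has_leading_term_mult:
  fixes P Q :: "'a::{linorder, ordered_cancel_comm_monoid_add} \<Rightarrow>\<^sub>0 'b::ring"
  assumes P: "has_leading_term P \<alpha> c" and Q: "has_leading_term Q \<alpha>' c'"
  shows "has_leading_term (P * Q) (\<alpha> + \<alpha>') (c * c')"
proof -
  let ?P = "P - single \<alpha> c" and ?Q = "Q - single \<alpha>' c'"
  have le: "\<beta> \<le> \<alpha>" if "\<beta> \<in> keys P" for \<beta>
    using P that by (simp add: has_leading_term_def)
  have le': "\<beta> \<le> \<alpha>'" if "\<beta> \<in> keys Q" for \<beta>
    using Q that by (simp add: has_leading_term_def)
  have "lookup (single \<alpha> c * ?Q) (\<alpha> + \<alpha>') = 0"
    by (intro lookup_eq_0_if_keys_less keys_mult_less_right[of _ \<alpha> ?Q \<alpha>'] keys_diff_leading_term[OF Q])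
      (auto split: if_splits)
  moreover have "lookup (?P * Q) (\<alpha> + \<alpha>') = 0"
    by (intro lookup_eq_0_if_keys_less keys_mult_less_left[of ?P \<alpha> Q \<alpha>'] keys_diff_leading_term[OF P] le')
  moreover have "P * Q = single \<alpha> c * single \<alpha>' c' + single \<alpha> c * ?Q + ?P * Q"
    by (simp add: algebra_simps)
  ultimately have "lookup (P * Q) (\<alpha> + \<alpha>') = c * c'"
    by (simp add: lookup_add mult_single)
  moreover have "\<gamma> \<le> \<alpha> + \<alpha>'" if "\<gamma> \<in> keys (P * Q)" for \<gamma>
    using that keys_mult[of P Q] le le' by (auto intro: add_mono)
  ultimately show ?thesis
    by (simp add: has_leading_term_def)
qed

lemma has_leading_term_power:
  fixes P :: "'a::{linorder, ordered_cancel_comm_monoid_add} \<Rightarrow>\<^sub>0 'b::ring_1"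
  assumes "has_leading_term P \<alpha> c"
  shows "has_leading_term (P ^ k) (\<Sum>_<k. \<alpha>) (c ^ k)"
proof (induction k)
  case (Suc k)
  then show ?case
    using has_leading_term_mult[OF assms Suc.IH] by (simp add: add.commute)
qed (simp add: has_leading_term_one)

lemma has_leading_term_prod:
  fixes P :: "'i \<Rightarrow> 'a::{linorder, ordered_cancel_comm_monoid_add} \<Rightarrow>\<^sub>0 'b::comm_ring_1"
  assumes "finite K" "\<And>k. k \<in> K \<Longrightarrow> has_leading_term (P k) (\<alpha> k) (c k)"
  shows "has_leading_term (\<Prod>k\<in>K. P k) (\<Sum>k\<in>K. \<alpha> k) (\<Prod>k\<in>K. c k)"
  using assms by (induction K rule: finite_induct) (auto simp: has_leading_term_one has_leading_term_mult)

lemma lookup_sum_single: "finite S \<Longrightarrow> lookup (\<Sum>j\<in>S. single j (e j)) i = (if i \<in> S then e i else 0)"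
  by (simp add: lookup_sum lookup_single when_def)

lemma sum_single_inject:
  assumes "e \<noteq> 0" "finite S" "finite S'" "(\<Sum>j\<in>S. single j e) = (\<Sum>j\<in>S'. single j e)"
  shows "S = S'"
proof -
  have "i \<in> S \<longleftrightarrow> i \<in> S'" for i
    using arg_cong[OF assms(4), of "\<lambda>\<alpha>. lookup \<alpha> i"] assms(1-3)
    by (simp add: lookup_sum_single split: if_splits)
  then show ?thesis
    by blast
qed

lemma sum_single_less_initial_segment:
  fixes e :: nat
  assumes "0 < e" "finite S" "card S = k" "S \<noteq> {..<k}"
  shows "(\<Sum>j\<in>S. single j e) < (\<Sum>j<k. single j e)"
proof -
  have "\<not> {..<k} \<subseteq> S"
    using card_subset_eq[OF assms(2), of "{..<k}"] assms(3,4) by auto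
  then have ex: "\<exists>t. t < k \<and> t \<notin> S"
    by auto
  define t where "t = (LEAST t. t < k \<and> t \<notin> S)"
  have t: "t < k" "t \<notin> S"
    using LeastI_ex[OF ex] by (simp_all add: t_def)
  have "j \<in> S" if "j < t" for j
    using not_less_Least[of j "\<lambda>t. t < k \<and> t \<notin> S"] that t(1) by (simp add: t_def)
  then show ?thesis
    unfolding less_poly_mapping.rep_eq less_fun_def
    using t assms(1,2) by (intro exI[of _ t]) (simp add: lookup_sum_single)
qed

definition theta_lead :: "nat \<Rightarrow> nat \<Rightarrow> nat \<Rightarrow> nat \<Rightarrow> nat \<Rightarrow>\<^sub>0 nat" where
  "theta_lead m p n k =
    (if Suc k < n then (\<Sum>j<Suc k. single j m) else (\<Sum>j<n. single j (m div p)))"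

lemma lookup_theta_lead:
  "lookup (theta_lead m p n k) i =
    (if Suc k < n then (if i \<le> k then m else 0) else if i < n then m div p else 0)"
  by (simp add: theta_lead_def lookup_sum_single less_Suc_eq_le del: sum.lessThan_Suc)

lemma has_leading_term_theta_poly:
  assumes "0 < m" "k < n"
  shows "has_leading_term (theta_poly m p n k) (theta_lead m p n k) 1"
proof (cases "Suc k < n")
  case True
  let ?I = "{..<Suc k}"
  have fin: "finite S" if "S \<in> ksubsets n (Suc k)" for S
    using that finite_subset by (auto simp: ksubsets_def)
  have "?I \<in> ksubsets n (Suc k)"
    using True by (auto simp: ksubsets_def)
  moreover have "lookup (theta_poly m p n k) (theta_lead m p n k)
      = (\<Sum>S\<in>ksubsets n (Suc k). if S = ?I then 1 else 0)"
    unfolding theta_poly_less[OF True] theta_lead_def lookup_sum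
    using True assms(1) fin sum_single_inject[of m _ ?I]
    by (intro sum.cong refl) (auto simp: lookup_single when_def simp del: sum.lessThan_Suc)
  ultimately have "lookup (theta_poly m p n k) (theta_lead m p n k) = 1"
    by simp
  moreover have "\<beta> \<le> theta_lead m p n k" if "\<beta> \<in> keys (theta_poly m p n k)" for \<beta>
  proof -
    have "\<beta> \<in> keys (\<Sum>S\<in>ksubsets n (Suc k). single (\<Sum>j\<in>S. single j m) (1::complex))"
      using that by (simp only: theta_poly_less[OF True])
    then have "\<beta> \<in> (\<Union>S\<in>ksubsets n (Suc k). keys (single (\<Sum>j\<in>S. single j m) (1::complex)))"
      by (rule subsetD[OF keys_sum])
    then obtain S where "S \<in> ksubsets n (Suc k)" "\<beta> = (\<Sum>j\<in>S. single j m)"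
      by auto
    then show ?thesis
      using True sum_single_less_initial_segment[OF assms(1) fin, of S "Suc k"]
      by (cases "S = ?I") (auto simp: theta_lead_def ksubsets_def)
  qed
  ultimately show ?thesis
    by (simp add: has_leading_term_def)
next
  case False
  then show ?thesis
    using assms(2) by (simp add: theta_poly_last theta_lead_def has_leading_term_def)
qed

definition theta_mono_lead :: "nat \<Rightarrow> nat \<Rightarrow> nat \<Rightarrow> (nat \<Rightarrow>\<^sub>0 nat) \<Rightarrow> nat \<Rightarrow>\<^sub>0 nat" where
  "theta_mono_lead m p n \<gamma> = (\<Sum>k\<in>keys \<gamma>. \<Sum>_<lookup \<gamma> k. theta_lead m p n k)"

lemma has_leading_term_mono_subst_theta:
  assumes "0 < m" "\<gamma> \<in> exps n"
  shows "has_leading_term (mono_subst (theta_poly m p n) \<gamma>) (theta_mono_lead m p n \<gamma>) 1"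
  unfolding mono_subst_def theta_mono_lead_def
proof (rule has_leading_term_prod[where c = "\<lambda>_. 1", simplified])
  fix k assume "k \<in> keys \<gamma>"
  then have "k < n"
    using assms(2) by (auto simp: exps_def)
  then show "has_leading_term (theta_poly m p n k ^ lookup \<gamma> k) (\<Sum>_<lookup \<gamma> k. theta_lead m p n k) 1"
    using has_leading_term_power[OF has_leading_term_theta_poly[OF assms(1)], of k n p "lookup \<gamma> k"]
    by simp
qed simp

lemma lookup_theta_mono_lead:
  "\<gamma> \<in> exps n \<Longrightarrow>
    lookup (theta_mono_lead m p n \<gamma>) i = (\<Sum>k<n. lookup \<gamma> k * lookup (theta_lead m p n k) i)"
  unfolding theta_mono_lead_def lookup_sum
  by (simp add: sum.mono_neutral_left[of "{..<n}" "keys \<gamma>"] exps_def in_keys_iff)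

lemma sum_lookup_theta_lead:
  assumes "i < Suc n'"
  shows "(\<Sum>k<Suc n'. g k * lookup (theta_lead m p (Suc n') k) i)
    = m * (\<Sum>k\<in>{i..<n'}. g k) + m div p * g n'"
proof -
  have "{..<n'} \<inter> {k. i \<le> k} = {i..<n'}"
    by auto
  then show ?thesis
    using assms by (simp add: lookup_theta_lead if_distrib[of "\<lambda>x. g _ * x"] sum.If_cases
        sum_distrib_left mult.commute cong: if_cong)
qed

text \<open>Write \<open>\<alpha>\<^sub>i = r + m \<beta>\<^sub>i\<close> with \<open>r = j (m/p)\<close> and \<open>\<beta>\<close> decreasing; then \<open>\<theta>\<^sup>\<gamma>\<close> with
  \<open>\<gamma>\<^sub>k = \<beta>\<^sub>k - \<beta>\<^sub>k\<^sub>+\<^sub>1\<close> for \<open>k < n - 1\<close> and \<open>\<gamma>\<^sub>n\<^sub>-\<^sub>1 = j + p \<beta>\<^sub>n\<^sub>-\<^sub>1\<close> has leading exponent \<open>\<alpha>\<close>.\<close>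
lemma theta_mono_lead_surj:
  assumes "0 < m" "p dvd m" "0 < n" "\<alpha> \<in> exps n"
    and mod: "\<And>i. i < n \<Longrightarrow> lookup \<alpha> i mod m = lookup \<alpha> 0 mod m"
    and dvd: "m div p dvd lookup \<alpha> 0"
    and antimono: "\<And>i. Suc i < n \<Longrightarrow> lookup \<alpha> (Suc i) \<le> lookup \<alpha> i"
  shows "\<exists>\<gamma>\<in>exps n. theta_mono_lead m p n \<gamma> = \<alpha>"
proof -
  obtain n' where n: "n = Suc n'"
    using assms(3) by (cases n) auto
  define d where "d = m div p"
  define r where "r = lookup \<alpha> 0 mod m"
  have m: "m = p * d"
    using assms(2) by (simp add: d_def)
  then have "d dvd r"
    unfolding r_def using dvd_mod[OF dvd[folded d_def]] by simp
  then obtain j where r: "r = d * j"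
    by (rule dvdE)
  define \<beta> where "\<beta> i = lookup \<alpha> i div m" for i
  have \<alpha>: "lookup \<alpha> i = r + m * \<beta> i" if "i < n" for i
    unfolding \<beta>_def r_def using mod[OF that] by (metis mod_mult_div_eq)
  define g where "g k = (if k < n' then \<beta> k - \<beta> (Suc k) else j + p * \<beta> n')" for k
  define \<gamma> where "\<gamma> = (\<Sum>k<n. single k (g k))"
  have \<gamma>: "\<gamma> \<in> exps n"
    unfolding \<gamma>_def by (rule exps_sum_single) simp
  have tail: "m * (\<Sum>k\<in>{i..<n'}. g k) + d * g n' = lookup \<alpha> i" if "i \<le> n'" for i
    using that
  proof (induction rule: inc_induct)
    case base
    show ?case
      using \<alpha>[of n'] n r m by (simp add: g_def algebra_simps)
  next
    case (step i)
    have "\<beta> (Suc i) \<le> \<beta> i"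
      unfolding \<beta>_def using antimono step(2) n by (simp add: div_le_mono)
    then have "m * g i + lookup \<alpha> (Suc i) = lookup \<alpha> i"
      using \<alpha>[of i] \<alpha>[of "Suc i"] step(2) n by (simp add: g_def diff_mult_distrib2 algebra_simps)
    then show ?case
      using step by (simp add: sum.atLeast_Suc_lessThan algebra_simps)
  qed
  have "lookup (theta_mono_lead m p n \<gamma>) i = lookup \<alpha> i" for i
  proof (cases "i < n")
    case True
    have "lookup (theta_mono_lead m p n \<gamma>) i = (\<Sum>k<n. g k * lookup (theta_lead m p n k) i)"
      unfolding lookup_theta_mono_lead[OF \<gamma>]
      by (intro sum.cong) (simp_all add: \<gamma>_def lookup_sum_single)
    also have "\<dots> = m * (\<Sum>k\<in>{i..<n'}. g k) + d * g n'"
      using True by (simp only: n sum_lookup_theta_lead d_def)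
    finally show ?thesis
      using tail[of i] True n by simp
  qed (use assms(4) \<gamma> in \<open>simp add: lookup_theta_mono_lead lookup_theta_lead lookup_eq_0_if_exps\<close>)
  then show ?thesis
    using \<gamma> poly_mapping_eqI by blast
qed

section \<open>Invariant polynomials are polynomials in \<open>\<theta>\<close>\<close>

lemma G_invariant_max_key:
  assumes "0 < m" "0 < p" "p dvd m" "0 < n" "G_invariant m p n q" "poly_in_vars n q"
    and "\<alpha> \<in> keys q" "\<And>\<beta>. \<beta> \<in> keys q \<Longrightarrow> \<beta> \<le> \<alpha>"
  shows "\<exists>\<gamma>\<in>exps n. has_leading_term (mono_subst (theta_poly m p n) \<gamma>) \<alpha> 1"
proof -
  have "\<alpha> \<in> exps n"
    using assms(6,7) by (auto simp: poly_in_vars_iff)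
  then obtain \<gamma> where "\<gamma> \<in> exps n" "theta_mono_lead m p n \<gamma> = \<alpha>"
    using theta_mono_lead_surj[OF assms(1,3,4) _ G_invariant_keys_mod[OF assms(1,5,6,7)]
        G_invariant_keys_dvd[OF assms(1-3,5-7,4)] G_invariant_max_key_antimono[OF assms(5-8)]]
    by blast
  with has_leading_term_mono_subst_theta[OF assms(1), of \<gamma> n p] show ?thesis
    by auto
qed

lemma wf_less_exps: "wf {(\<alpha>, \<beta>). \<alpha> \<in> exps n \<and> \<beta> \<in> exps n \<and> \<alpha> < \<beta>}"
proof (rule wf_subset)
  let ?L = "\<lambda>\<alpha>. map (lookup \<alpha>) [0..<n]"
  show "wf (inv_image (lexn less_than n) ?L)"
    by (intro wf_inv_image wf_lexn wf_less_than)
  show "{(\<alpha>, \<beta>). \<alpha> \<in> exps n \<and> \<beta> \<in> exps n \<and> \<alpha> < \<beta>} \<subseteq> inv_image (lexn less_than n) ?L"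
  proof safe
    fix \<alpha> \<beta> :: "nat \<Rightarrow>\<^sub>0 nat"
    assume "\<alpha> \<in> exps n" "\<beta> \<in> exps n" "\<alpha> < \<beta>"
    then obtain k where k: "lookup \<alpha> k < lookup \<beta> k" "\<And>k'. k' < k \<Longrightarrow> lookup \<alpha> k' = lookup \<beta> k'"
      unfolding less_poly_mapping.rep_eq less_fun_def by blast
    then have "k < n"
      using \<open>\<beta> \<in> exps n\<close> lookup_eq_0_if_exps[of \<beta> n k] by (cases "k < n") auto
    then have "[0..<n] = [0..<k] @ k # [Suc k..<n]"
      using upt_add_eq_append[of 0 k "n - k"] by (simp add: upt_conv_Cons)
    then show "(\<alpha>, \<beta>) \<in> inv_image (lexn less_than n) ?L"
      using k \<open>k < n\<close> unfolding inv_image_def lexn_conv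
      by (auto intro!: exI[of _ "map (lookup \<alpha>) [0..<k]"])
  qed
qed

lemma G_invariant_reduce:
  assumes "0 < m" "0 < p" "p dvd m" "0 < n" "G_invariant m p n q" "poly_in_vars n q" "q \<noteq> 0"
  obtains \<gamma> c where "\<gamma> \<in> exps n"
    and "\<And>\<beta>. \<beta> \<in> keys (q - psubst (single \<gamma> c) (theta_poly m p n)) \<Longrightarrow> \<beta> < Max (keys q)"
proof -
  let ?\<theta> = "theta_poly m p n"
  define \<mu> where "\<mu> = Max (keys q)"
  have \<mu>: "\<mu> \<in> keys q" "\<And>\<beta>. \<beta> \<in> keys q \<Longrightarrow> \<beta> \<le> \<mu>"
    using assms(7) by (simp_all add: \<mu>_def)
  obtain \<gamma> where \<gamma>: "\<gamma> \<in> exps n" and lead: "has_leading_term (mono_subst ?\<theta> \<gamma>) \<mu> 1"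
    using G_invariant_max_key[OF assms(1-6) \<mu>] by blast
  define c where "c = lookup q \<mu>"
  let ?X = "mono_subst ?\<theta> \<gamma> - single \<mu> 1"
  have eq: "q - psubst (single \<gamma> c) ?\<theta> = (q - single \<mu> c) - single 0 c * ?X"
    by (simp add: psubst_single algebra_simps mult_single)
  have "keys (q - single \<mu> c) \<subseteq> {..<\<mu>}"
    using keys_diff_leading_term[of q \<mu> c] \<mu> by (auto simp: has_leading_term_def c_def)
  moreover have "keys (single 0 c * ?X) \<subseteq> {..<\<mu>}"
    using keys_mult_less_right[of "single 0 c" 0 ?X \<mu>] keys_diff_leading_term[OF lead] by fastforce
  ultimately have "keys ((q - single \<mu> c) - single 0 c * ?X) \<subseteq> {..<\<mu>}"
    using keys_diff[of "q - single \<mu> c" "single 0 c * ?X"] by blast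
  then have "keys (q - psubst (single \<gamma> c) ?\<theta>) \<subseteq> {..<\<mu>}"
    by (simp only: eq)
  then show ?thesis
    by (intro that[OF \<gamma>, of c]) (auto simp: \<mu>_def)
qed

lemma G_invariant_eq_psubst_theta_below:
  assumes "0 < m" "0 < p" "p dvd m" "0 < n"
  shows "\<alpha> \<in> exps n \<Longrightarrow> poly_in_vars n q \<Longrightarrow> G_invariant m p n q \<Longrightarrow> (\<forall>\<beta>\<in>keys q. \<beta> \<le> \<alpha>) \<Longrightarrow>
    \<exists>f. poly_in_vars n f \<and> q = psubst f (theta_poly m p n)"
proof (induction \<alpha> arbitrary: q rule: wf_induct_rule[OF wf_less_exps[of n]])
  case (1 \<alpha> q)
  let ?\<theta> = "theta_poly m p n"
  show ?case
  proof (cases "q = 0")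
    case False
    obtain \<gamma> c where \<gamma>: "\<gamma> \<in> exps n"
      and less: "\<And>\<beta>. \<beta> \<in> keys (q - psubst (single \<gamma> c) ?\<theta>) \<Longrightarrow> \<beta> < Max (keys q)"
      using G_invariant_reduce[OF assms 1(4,3) False] by blast
    define q' where "q' = q - psubst (single \<gamma> c) ?\<theta>"
    have q': "poly_in_vars n q'" "G_invariant m p n q'"
      unfolding q'_def using 1(3,4)
      by (auto intro!: poly_in_vars_diff poly_in_vars_psubst poly_in_vars_single \<gamma>
          poly_in_vars_theta_poly G_invariant_diff G_invariant_psubst_theta)
    obtain f' where f': "poly_in_vars n f'" "q' = psubst f' ?\<theta>"
    proof (cases "q' = 0")
      case False
      define \<mu>' where "\<mu>' = Max (keys q')"
      have \<mu>': "\<mu>' \<in> keys q'" "\<forall>\<beta>\<in>keys q'. \<beta> \<le> \<mu>'"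
        using False by (simp_all add: \<mu>'_def)
      then have "\<mu>' \<in> exps n"
        using q'(1) by (auto simp: poly_in_vars_iff)
      moreover have "Max (keys q) \<le> \<alpha>"
        using 1(5) \<open>q \<noteq> 0\<close> by (metis Max_in finite_keys keys_eq_empty)
      then have "\<mu>' < \<alpha>"
        using less[of \<mu>'] \<mu>'(1) by (simp add: q'_def)
      ultimately show ?thesis
        using 1(1)[of \<mu>' q'] 1(2) q' \<mu>'(2) that by blast
    qed (use that[of 0] in simp)
    have "q = q' + psubst (single \<gamma> c) ?\<theta>"
      by (simp add: q'_def)
    also have "\<dots> = psubst (f' + single \<gamma> c) ?\<theta>"
      by (simp add: f'(2) psubst_add)
    finally show ?thesis
      using poly_in_vars_add[OF f'(1) poly_in_vars_single[OF \<gamma>]] by blast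
  qed (auto intro: exI[of _ 0])
qed

theorem G_invariant_eq_psubst_theta:
  assumes "0 < m" "0 < p" "p dvd m" "0 < n" "poly_in_vars n q" "G_invariant m p n q"
  shows "\<exists>f. poly_in_vars n f \<and> q = psubst f (theta_poly m p n)"
proof (cases "q = 0")
  case False
  then show ?thesis
    using G_invariant_eq_psubst_theta_below[OF assms(1-4), of "Max (keys q)" q] assms(5,6)
    by (simp add: poly_in_vars_iff subset_iff)
qed (auto intro: exI[of _ 0])

section \<open>Von Neumann's inequality for invariant polynomials\<close>

lemma commuting_tuple_theta_op:
  assumes "commuting_tuple n T"
  shows "commuting_tuple n (theta_op m p n T)"
  using commuting_tuple_opeval[OF assms poly_in_vars_theta_poly] by (simp add: theta_op_def)

lemma opeval_psubst_theta:
  assumes "commuting_tuple n T" "poly_in_vars n f"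
  shows "opeval (psubst f (theta_poly m p n)) T = opeval f (theta_op m p n T)"
  using opeval_psubst[OF assms poly_in_vars_theta_poly] by (simp add: fun_eq_iff theta_op_def)

lemma SUP_closed_Theta:
  "(SUP w\<in>closed_Theta m p n. cmod (peval f w))
    = (SUP z\<in>closed_polydisc n. cmod (peval (psubst f (theta_poly m p n)) z))"
  by (simp add: closed_Theta_def image_image peval_psubst theta_def)

theorem proposition2p8:
  fixes m p n :: nat and T :: "nat \<Rightarrow> 'h::{complex_inner,complete_space} \<Rightarrow> 'h"
  assumes "0 < m" and "0 < p" and "p dvd m" and "1 < n"
    and "commuting_contractions n T"
  shows "Theta_contraction m p n (theta_op m p n T) \<longleftrightarrow>
    (\<forall>q. poly_in_vars n q \<and> G_invariant m p n q \<longrightarrow>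
       onorm (opeval q T) \<le> (SUP z\<in>closed_polydisc n. cmod (peval q z)))"
proof -
  have T: "commuting_tuple n T"
    using assms(5) by (simp add: commuting_contractions_def)
  have factor: "\<exists>f. poly_in_vars n f \<and> q = psubst f (theta_poly m p n)"
    if "poly_in_vars n q" "G_invariant m p n q" for q
    using G_invariant_eq_psubst_theta[OF assms(1-3) _ that] assms(4) by simp
  show ?thesis (is "?L \<longleftrightarrow> ?R")
  proof
    assume ?L
    with factor show ?R
      unfolding Theta_contraction_def by (metis opeval_psubst_theta[OF T] SUP_closed_Theta)
  next
    assume ?R
    with commuting_tuple_theta_op[OF T] show ?L
      unfolding Theta_contraction_def
      by (metis opeval_psubst_theta[OF T] SUP_closed_Theta poly_in_vars_psubst
          poly_in_vars_theta_poly G_invariant_psubst_theta)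
  qed
qed

end
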